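(* Let $\gamma$ be a finite set of interactions over components $B_1,\dots,B_n$, and let $\mathcal{E}^*(\gamma)=\bigwedge_{a\in\mathit{Act}(\gamma)}h_a=\min_{\alpha\in\gamma,\ a\in\alpha}h_\alpha$. (1) $\mathcal{E}^*(\gamma)$ is an inductive predicate of $B^*\|_{\gamma^h}B_i^h$. (2) The equivalence $\exists\mathcal{H}_\gamma.\,\mathcal{E}^*(\gamma)\equiv\mathcal{E}(\gamma)$ holds, for all nonnegative real values of the action history clocks $h_a$, $a\in\mathit{Act}(\gamma)$ (with $\mathcal{H}_\gamma=\{h_\alpha\mid\alpha\in\gamma\}$ ranging over nonnegative reals).
   Context: Components are timed automata $B=(L,A,\mathcal{X},T,\mathsf{tpc},s_0)$ (locations, actions, clocks, edges $(l,(a,g,r),l')$ with guard $g$ and reset set $r$, time progress conditions, initial configuration); states $(l,\mathbf{v})$ with $\mathbf{v}$ a clock valuation in $\mathbb{R}_{\ge0}$; time transitions add the same $\delta\ge0$ to all clocks (allowed if $\mathsf{tpc}$ holds along the way), discrete transitions follow an edge whose guard holds and reset the clocks in $r$ to $0$. A state predicate is inductive if whenever it holds in a state it holds in all its time and discrete successors. For components with pairwise disjoint action sets, an interaction is a nonempty set of actions with at most one action per component; $\mathit{Act}(\gamma)=\bigcup_{\alpha\in\gamma}\alpha$; in a composition under $\gamma$, executing $\alpha=\{a_i\}_{i\in I}$ fires simultaneously one edge labelled $a_i$ in each component $i\in I$, with conjoined guards and united resets, other components unchanged. Action history clocks: $B^h$ adds fresh clocks $h_0$ and $h_a$ ($a\in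 A$), adds $h_a$ to the resets of each edge labelled $a$, initial constraint $c_0\wedge h_0=0\wedge\bigwedge_ah_a>0$; $h_0$ is shared and never reset. Interaction history clocks: $B^*$ has one location $l^*$, actions $a_\alpha$ and clocks $h_\alpha$ for $\alpha\in\gamma$, self-loop edges $(l^*,(a_\alpha,\mathit{true},\{h_\alpha\}),l^* )$, $\mathsf{tpc}(l^* )=\mathit{true}$, initial configuration $(l^*,\mathit{true})$; $\gamma^h=\{\{a_\alpha\}\cup\alpha\mid\alpha\in\gamma\}$; $B^*\|_{\gamma^h}B_i^h$ is the composition of $B^*$ and the $B_i^h$ under $\gamma^h$. Interaction inequalities: $\gamma\ominus\alpha=\{\beta\setminus\alpha\mid\beta\in\gamma,\beta\not\subseteq\alpha\}$; $\mathcal{E}(\emptyset)=\mathit{true}$ and for $\gamma\ne\emptyset$, $\mathcal{E}(\gamma)=\bigvee_{\alpha\in\gamma}\Big(\bigwedge_{a_i,a_j\in\alpha}h_{a_i}=h_{a_j}\wedge\bigwedge_{a_i\in\alpha,\,a_k\in\mathit{Act}(\gamma\ominus\alpha)}h_{a_i}\le h_{a_k}\wedge\mathcal{E}(\gamma\ominus\alpha)\Big)$. *)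

theory Defs
  imports Complex_Main
begin

text \<open>A component B = (L, A, X, T, tpc, s0). Guards and time progress conditions
  are represented semantically as predicates on clock valuations. An edge is
  (l, a, g, r, l').\<close>

type_synonym ('l,'a,'c) edge = "'l \<times> 'a \<times> (('c \<Rightarrow> real) \<Rightarrow> bool) \<times> 'c set \<times> 'l"

record ('l,'a,'c) ta =
  locs :: "'l set"
  acts :: "'a set"
  clks :: "'c set"
  edges :: "('l,'a,'c) edge set"
  tpc :: "'l \<Rightarrow> ('c \<Rightarrow> real) \<Rightarrow> bool"
  init_loc :: 'l
  init_cstr :: "('c \<Rightarrow> real) \<Rightarrow> bool"

definition e_src :: "('l,'a,'c) edge \<Rightarrow> 'l" where "e_src e = fst e"
definition e_act :: "('l,'a,'c) edge \<Rightarrow> 'a" where "e_act e = fst (snd e)"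
definition e_guard :: "('l,'a,'c) edge \<Rightarrow> ('c \<Rightarrow> real) \<Rightarrow> bool" where "e_guard e = fst (snd (snd e))"
definition e_reset :: "('l,'a,'c) edge \<Rightarrow> 'c set" where "e_reset e = fst (snd (snd (snd e)))"
definition e_tgt :: "('l,'a,'c) edge \<Rightarrow> 'l" where "e_tgt e = snd (snd (snd (snd e)))"

text \<open>Components are B 0, ..., B (n-1).\<close>

definition is_interaction :: "(nat \<Rightarrow> ('l,'a,'c) ta) \<Rightarrow> nat \<Rightarrow> 'a set \<Rightarrow> bool" where
  "is_interaction B n \<alpha> \<longleftrightarrow> \<alpha> \<noteq> {} \<and> \<alpha> \<subseteq> (\<Union>i<n. acts (B i)) \<and>
     (\<forall>i<n. \<forall>a\<in>\<alpha> \<inter> acts (B i). \<forall>b\<in>\<alpha> \<inter> acts (B i). a = b)"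

definition Act :: "'a set set \<Rightarrow> 'a set" where
  "Act \<gamma> = \<Union>\<gamma>"

text \<open>Clocks of the composed system: the clocks of component i (tagged with i),
  the action history clocks h_a, the interaction history clocks h_alpha (clocks of B*),
  and the shared clock h_0 (never reset).\<close>

datatype ('a,'c) hclock = CClk nat 'c | HAct 'a | HInt "'a set" | H0

text \<open>A state: a location for each component (B* has a single location l*, omitted)
  and a clock valuation over all clocks.\<close>

type_synonym ('l,'a,'c) hstate = "(nat \<Rightarrow> 'l) \<times> (('a,'c) hclock \<Rightarrow> real)"

definition comp_val :: "(('a,'c) hclock \<Rightarrow> real) \<Rightarrow> nat \<Rightarrow> ('c \<Rightarrow> real)" where
  "comp_val v i = (\<lambda>c. v (CClk i c))"

definition is_state :: "(nat \<Rightarrow> ('l,'a,'c) ta) \<Rightarrow> nat \<Rightarrow> ('l,'a,'c) hstate \<Rightarrow> bool" where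
  "is_state B n s \<longleftrightarrow> (\<forall>i<n. fst s i \<in> locs (B i)) \<and> (\<forall>x. snd s x \<ge> 0)"

text \<open>Time transitions: all clocks advance by delta, allowed if every tpc holds along the way
  (the tpc of B^h is that of B; the tpc of B* is true).\<close>

definition time_step :: "(nat \<Rightarrow> ('l,'a,'c) ta) \<Rightarrow> nat \<Rightarrow> ('l,'a,'c) hstate \<Rightarrow> ('l,'a,'c) hstate \<Rightarrow> bool" where
  "time_step B n s s' \<longleftrightarrow> (\<exists>\<delta>\<ge>0. fst s' = fst s \<and> snd s' = (\<lambda>x. snd s x + \<delta>) \<and>
      (\<forall>i<n. \<forall>t. 0 \<le> t \<and> t \<le> \<delta> \<longrightarrow> tpc (B i) (fst s i) (comp_val (\<lambda>x. snd s x + t) i)))"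

text \<open>Discrete transitions under gamma^h: executing {a_alpha} \<union> alpha fires the self-loop of B*
  (resetting h_alpha) and, in each component i participating in alpha, one edge labelled by
  its action of alpha whose guard holds; resets are united, including the history clocks h_a
  of the executed actions.\<close>

definition disc_step :: "(nat \<Rightarrow> ('l,'a,'c) ta) \<Rightarrow> nat \<Rightarrow> 'a set set \<Rightarrow> ('l,'a,'c) hstate \<Rightarrow> ('l,'a,'c) hstate \<Rightarrow> bool" where
  "disc_step B n \<gamma> s s' \<longleftrightarrow> (\<exists>\<alpha>\<in>\<gamma>. \<exists>e :: nat \<Rightarrow> ('l,'a,'c) edge.
      (\<forall>i<n. \<alpha> \<inter> acts (B i) \<noteq> {} \<longrightarrow>
         e i \<in> edges (B i) \<and> e_src (e i) = fst s i \<and> e_act (e i) \<in> \<alpha> \<inter> acts (B i) \<and>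
         e_guard (e i) (comp_val (snd s) i)) \<and>
      fst s' = (\<lambda>i. if i < n \<and> \<alpha> \<inter> acts (B i) \<noteq> {} then e_tgt (e i) else fst s i) \<and>
      snd s' = (\<lambda>x. if x \<in> {CClk i c | i c. i < n \<and> \<alpha> \<inter> acts (B i) \<noteq> {} \<and> c \<in> e_reset (e i)}
                          \<union> HAct ` \<alpha> \<union> {HInt \<alpha>}
                     then 0 else snd s x))"

definition comp_step :: "(nat \<Rightarrow> ('l,'a,'c) ta) \<Rightarrow> nat \<Rightarrow> 'a set set \<Rightarrow> ('l,'a,'c) hstate \<Rightarrow> ('l,'a,'c) hstate \<Rightarrow> bool" where
  "comp_step B n \<gamma> s s' \<longleftrightarrow> time_step B n s s' \<or> disc_step B n \<gamma> s s'"

definition inductive_pred :: "(nat \<Rightarrow> ('l,'a,'c) ta) \<Rightarrow> nat \<Rightarrow> 'a set set \<Rightarrow> (('l,'a,'c) hstate \<Rightarrow> bool) \<Rightarrow> bool" where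
  "inductive_pred B n \<gamma> P \<longleftrightarrow> (\<forall>s s'. is_state B n s \<longrightarrow> P s \<longrightarrow> comp_step B n \<gamma> s s' \<longrightarrow> P s')"

definition iminus :: "'a set set \<Rightarrow> 'a set \<Rightarrow> 'a set set" (infixl "\<ominus>" 65) where
  "\<gamma> \<ominus> \<alpha> = (\<lambda>\<beta>. \<beta> - \<alpha>) ` {\<beta> \<in> \<gamma>. \<not> \<beta> \<subseteq> \<alpha>}"

lemma card_iminus_less:
  assumes "finite \<gamma>" "\<alpha> \<in> \<gamma>"
  shows "card (\<gamma> \<ominus> \<alpha>) < card \<gamma>"
proof -
  have "card (\<gamma> \<ominus> \<alpha>) \<le> card {\<beta> \<in> \<gamma>. \<not> \<beta> \<subseteq> \<alpha>}"
    unfolding iminus_def using assms by (intro card_image_le) auto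
  also have "\<dots> < card \<gamma>"
    using assms by (intro psubset_card_mono) auto
  finally show ?thesis .
qed

text \<open>E(gamma) over values h a of the action history clocks (gamma is meant to be finite;
  for infinite gamma the value is irrelevant and set to False).\<close>

function Eineq :: "'a set set \<Rightarrow> ('a \<Rightarrow> real) \<Rightarrow> bool" where
  "Eineq \<gamma> h = (if \<gamma> = {} then True else if infinite \<gamma> then False else
     (\<exists>\<alpha>\<in>\<gamma>. (\<forall>ai\<in>\<alpha>. \<forall>aj\<in>\<alpha>. h ai = h aj) \<and>
             (\<forall>ai\<in>\<alpha>. \<forall>ak\<in>Act (\<gamma> \<ominus> \<alpha>). h ai \<le> h ak) \<and>
             Eineq (\<gamma> \<ominus> \<alpha>) h))"
  by pat_completeness auto
termination
  by (relation "measure (\<lambda>(\<gamma>, h). card \<gamma>)") (auto intro: card_iminus_less)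

declare Eineq.simps [simp del]

definition Estar :: "'a set set \<Rightarrow> ('a \<Rightarrow> real) \<Rightarrow> ('a set \<Rightarrow> real) \<Rightarrow> bool" where
  "Estar \<gamma> h hI \<longleftrightarrow> (\<forall>a\<in>Act \<gamma>. h a = Min ((\<lambda>\<alpha>. hI \<alpha>) ` {\<alpha> \<in> \<gamma>. a \<in> \<alpha>}))"

end

theory Submission
  imports Defs
begin

text \<open>For finite \<open>\<gamma>\<close>, \<open>Estar \<gamma> h hI\<close> says that each \<open>h a\<close> is a lower bound of the \<open>hI \<beta>\<close>
  with \<open>a \<in> \<beta>\<close> that is attained, and all arguments below use this form. A time step adds the
  same \<open>\<delta>\<close> to every clock; an \<open>\<alpha>\<close>-step resets \<open>h\<^sub>\<alpha>\<close> and the \<open>h\<^sub>a\<close>, \<open>a \<in> \<alpha>\<close>, to 0, which lies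
  below every clock value, and leaves the other history clocks alone. For the equivalence, an
  interaction \<open>\<alpha>\<close> with least \<open>hI \<alpha>\<close> is one that \<open>Eineq\<close> may peel off first: all actions of \<open>\<alpha>\<close>
  carry that least value, and the minima of \<open>hI\<close> over the fibres of \<open>\<beta> \<mapsto> \<beta> - \<alpha>\<close> solve \<open>Estar\<close>
  for \<open>\<gamma> \<ominus> \<alpha>\<close>. Conversely a solution for \<open>\<gamma> \<ominus> \<alpha>\<close> extends to \<open>\<gamma>\<close> by giving the interactions
  contained in \<open>\<alpha>\<close> the common value of \<open>h\<close> on \<open>\<alpha>\<close>; clamping it at 0 then costs nothing as \<open>h \<ge> 0\<close>.\<close>

lemma Act_iminus: "Act (\<gamma> \<ominus> \<alpha>) = Act \<gamma> - \<alpha>"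
  unfolding Act_def iminus_def by auto

lemma iminus_memI: "\<beta> \<in> \<gamma> \<Longrightarrow> \<not> \<beta> \<subseteq> \<alpha> \<Longrightarrow> \<beta> - \<alpha> \<in> \<gamma> \<ominus> \<alpha>"
  unfolding iminus_def by auto

lemma finite_iminus: "finite \<gamma> \<Longrightarrow> finite (\<gamma> \<ominus> \<alpha>)"
  unfolding iminus_def by auto

lemma Eineq_iff:
  assumes "finite \<gamma>" "\<gamma> \<noteq> {}"
  shows "Eineq \<gamma> h \<longleftrightarrow> (\<exists>\<alpha>\<in>\<gamma>. (\<forall>ai\<in>\<alpha>. \<forall>aj\<in>\<alpha>. h ai = h aj) \<and>
             (\<forall>ai\<in>\<alpha>. \<forall>ak\<in>Act (\<gamma> \<ominus> \<alpha>). h ai \<le> h ak) \<and> Eineq (\<gamma> \<ominus> \<alpha>) h)"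
  using assms by (subst Eineq.simps) simp

lemma Eineq_empty: "Eineq {} h"
  by (subst Eineq.simps) simp

lemma Estar_iff:
  assumes "finite \<gamma>"
  shows "Estar \<gamma> h hI \<longleftrightarrow>
    (\<forall>\<beta>\<in>\<gamma>. \<forall>a\<in>\<beta>. h a \<le> hI \<beta>) \<and> (\<forall>a\<in>Act \<gamma>. \<exists>\<beta>\<in>\<gamma>. a \<in> \<beta> \<and> hI \<beta> = h a)"
proof -
  have "h a = Min (hI ` {\<beta> \<in> \<gamma>. a \<in> \<beta>}) \<longleftrightarrow>
      (\<forall>\<beta>\<in>\<gamma>. a \<in> \<beta> \<longrightarrow> h a \<le> hI \<beta>) \<and> (\<exists>\<beta>\<in>\<gamma>. a \<in> \<beta> \<and> hI \<beta> = h a)"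
    if "a \<in> Act \<gamma>" for a
  proof -
    have "finite (hI ` {\<beta> \<in> \<gamma>. a \<in> \<beta>})" "hI ` {\<beta> \<in> \<gamma>. a \<in> \<beta>} \<noteq> {}"
      using assms that by (auto simp: Act_def)
    then show ?thesis
      by (auto simp: eq_Min_iff image_iff)
  qed
  then show ?thesis
    unfolding Estar_def Act_def by blast
qed

lemma Estar_shift:
  assumes "finite \<gamma>" "Estar \<gamma> h hI"
  shows "Estar \<gamma> (\<lambda>a. h a + \<delta>) (\<lambda>\<beta>. hI \<beta> + \<delta>)"
  using assms by (auto simp: Estar_iff)

lemma Estar_reset:
  assumes "finite \<gamma>" "Estar \<gamma> h hI" "\<alpha> \<in> \<gamma>" "\<forall>\<beta>\<in>\<gamma>. hI \<beta> \<ge> 0"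
  shows "Estar \<gamma> (\<lambda>a. if a \<in> \<alpha> then 0 else h a) (hI(\<alpha> := 0))"
proof -
  have "\<forall>\<beta>\<in>\<gamma>. \<forall>a\<in>\<beta>. h a \<le> hI \<beta>" "\<forall>a\<in>Act \<gamma>. \<exists>\<beta>\<in>\<gamma>. a \<in> \<beta> \<and> hI \<beta> = h a"
    using assms(2) by (simp_all add: Estar_iff[OF assms(1)])
  with assms(3,4) show ?thesis
    unfolding Estar_iff[OF assms(1)] by (auto; fastforce)
qed

lemma time_step_shifts_clocks:
  "time_step B n s s' \<Longrightarrow> \<exists>\<delta>. snd s' = (\<lambda>x. snd s x + \<delta>)"
  unfolding time_step_def by auto

lemma disc_step_resets_history_clocks:
  fixes B :: "nat \<Rightarrow> ('l,'a,'c) ta"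
  assumes "disc_step B n \<gamma> s s'"
  obtains \<alpha> where "\<alpha> \<in> \<gamma>"
    "(\<lambda>a. snd s' (HAct a)) = (\<lambda>a. if a \<in> \<alpha> then 0 else snd s (HAct a))"
    "(\<lambda>\<beta>. snd s' (HInt \<beta>)) = (\<lambda>\<beta>. snd s (HInt \<beta>))(\<alpha> := 0)"
proof -
  obtain \<alpha> and e :: "nat \<Rightarrow> ('l,'a,'c) edge" where "\<alpha> \<in> \<gamma>" and
    "snd s' = (\<lambda>x. if x \<in> {CClk i c | i c. i < n \<and> \<alpha> \<inter> acts (B i) \<noteq> {} \<and> c \<in> e_reset (e i)}
                          \<union> HAct ` \<alpha> \<union> {HInt \<alpha>} then 0 else snd s x)"
    using assms unfolding disc_step_def by blast
  then show thesis
    by (intro that[of \<alpha>]) (auto simp: fun_eq_iff image_iff)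
qed

lemma inductive_pred_Estar:
  fixes B :: "nat \<Rightarrow> ('l,'a,'c) ta"
  assumes "finite \<gamma>"
  shows "inductive_pred B n \<gamma> (\<lambda>s. Estar \<gamma> (\<lambda>a. snd s (HAct a)) (\<lambda>\<alpha>. snd s (HInt \<alpha>)))"
  unfolding inductive_pred_def comp_step_def
proof (intro allI impI, elim disjE)
  fix s s' :: "('l,'a,'c) hstate"
  assume E: "Estar \<gamma> (\<lambda>a. snd s (HAct a)) (\<lambda>\<alpha>. snd s (HInt \<alpha>))"
  { assume "time_step B n s s'"
    then obtain \<delta> where "snd s' = (\<lambda>x. snd s x + \<delta>)"
      using time_step_shifts_clocks by blast
    then show "Estar \<gamma> (\<lambda>a. snd s' (HAct a)) (\<lambda>\<alpha>. snd s' (HInt \<alpha>))"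
      using Estar_shift[OF assms E] by simp }
  assume "is_state B n s" and "disc_step B n \<gamma> s s'"
  then have nonneg: "\<forall>\<beta>\<in>\<gamma>. snd s (HInt \<beta>) \<ge> 0"
    unfolding is_state_def by blast
  obtain \<alpha> where "\<alpha> \<in> \<gamma>"
    and act: "(\<lambda>a. snd s' (HAct a)) = (\<lambda>a. if a \<in> \<alpha> then 0 else snd s (HAct a))"
    and int: "(\<lambda>\<beta>. snd s' (HInt \<beta>)) = (\<lambda>\<beta>. snd s (HInt \<beta>))(\<alpha> := 0)"
    using disc_step_resets_history_clocks[OF \<open>disc_step B n \<gamma> s s'\<close>] by blast
  show "Estar \<gamma> (\<lambda>a. snd s' (HAct a)) (\<lambda>\<alpha>. snd s' (HInt \<alpha>))"
    unfolding act int using Estar_reset[OF assms E \<open>\<alpha> \<in> \<gamma>\<close> nonneg] .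
qed

lemma Estar_fibre_Min:
  assumes "finite \<gamma>" "Estar \<gamma> h hI"
  shows "Estar (\<gamma> \<ominus> \<alpha>) h (\<lambda>\<beta>'. Min (hI ` {\<beta> \<in> \<gamma>. \<not> \<beta> \<subseteq> \<alpha> \<and> \<beta> - \<alpha> = \<beta>'}))"
    (is "Estar _ h ?hI'")
proof -
  have fibre: "finite (hI ` {\<beta> \<in> \<gamma>. \<not> \<beta> \<subseteq> \<alpha> \<and> \<beta> - \<alpha> = \<beta>'})" for \<beta>'
    using assms(1) by simp
  have E: "\<forall>\<beta>\<in>\<gamma>. \<forall>a\<in>\<beta>. h a \<le> hI \<beta>" "\<forall>a\<in>Act \<gamma>. \<exists>\<beta>\<in>\<gamma>. a \<in> \<beta> \<and> hI \<beta> = h a"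
    using assms(2) by (simp_all add: Estar_iff[OF assms(1)])
  have lower: "h a \<le> ?hI' \<beta>'" if "\<beta>' \<in> \<gamma> \<ominus> \<alpha>" "a \<in> \<beta>'" for a \<beta>'
  proof -
    have "{\<beta> \<in> \<gamma>. \<not> \<beta> \<subseteq> \<alpha> \<and> \<beta> - \<alpha> = \<beta>'} \<noteq> {}"
      using that(1) unfolding iminus_def by blast
    moreover have "\<forall>\<beta>\<in>{\<beta> \<in> \<gamma>. \<not> \<beta> \<subseteq> \<alpha> \<and> \<beta> - \<alpha> = \<beta>'}. h a \<le> hI \<beta>"
      using E(1) that(2) by blast
    ultimately show ?thesis
      by (simp add: Min_ge_iff[OF fibre])
  qed
  have attained: "\<exists>\<beta>'\<in>\<gamma> \<ominus> \<alpha>. a \<in> \<beta>' \<and> ?hI' \<beta>' = h a" if "a \<in> Act (\<gamma> \<ominus> \<alpha>)" for a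
  proof -
    from that have "a \<notin> \<alpha>" "a \<in> Act \<gamma>"
      by (auto simp: Act_iminus)
    then obtain \<beta> where \<beta>: "\<beta> \<in> \<gamma>" "a \<in> \<beta>" "hI \<beta> = h a" "\<not> \<beta> \<subseteq> \<alpha>"
      using E(2) by blast
    have "?hI' (\<beta> - \<alpha>) \<le> hI \<beta>"
      using \<beta>(1,4) by (intro Min_le[OF fibre] imageI) simp
    with \<beta>(3) have "?hI' (\<beta> - \<alpha>) \<le> h a"
      by simp
    moreover have mem: "\<beta> - \<alpha> \<in> \<gamma> \<ominus> \<alpha>" and "a \<in> \<beta> - \<alpha>"
      using \<beta> \<open>a \<notin> \<alpha>\<close> by (auto intro: iminus_memI)
    moreover note lower[OF mem \<open>a \<in> \<beta> - \<alpha>\<close>]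
    ultimately show ?thesis
      by (intro bexI[OF _ mem]) simp
  qed
  show ?thesis
    unfolding Estar_iff[OF finite_iminus[OF assms(1)]] using lower attained by blast
qed

lemma Estar_imp_Eineq: "finite \<gamma> \<Longrightarrow> Estar \<gamma> h hI \<Longrightarrow> Eineq \<gamma> h"
proof (induction \<gamma> h arbitrary: hI rule: Eineq.induct)
  case (1 \<gamma> h)
  show ?case
  proof (cases "\<gamma> = {}")
    case True
    then show ?thesis by (simp add: Eineq_empty)
  next
    case False
    have fin: "finite \<gamma>" and E: "Estar \<gamma> h hI"
      using "1.prems" .
    define \<alpha> where "\<alpha> = arg_min_on hI \<gamma>"
    have \<alpha>: "\<alpha> \<in> \<gamma>" "\<forall>\<beta>\<in>\<gamma>. hI \<alpha> \<le> hI \<beta>"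
      unfolding \<alpha>_def using fin False by (simp_all add: arg_min_if_finite arg_min_least)
    have lower: "\<forall>\<beta>\<in>\<gamma>. \<forall>a\<in>\<beta>. h a \<le> hI \<beta>"
      and attained: "\<forall>a\<in>Act \<gamma>. \<exists>\<beta>\<in>\<gamma>. a \<in> \<beta> \<and> hI \<beta> = h a"
      using E unfolding Estar_iff[OF fin] by blast+
    have least: "hI \<alpha> \<le> h a" if a: "a \<in> Act \<gamma>" for a
    proof -
      obtain \<beta> where "\<beta> \<in> \<gamma>" and "hI \<beta> = h a"
        using attained a by blast
      with \<alpha>(2) show ?thesis
        by (metis order_trans order_refl)
    qed
    have on_\<alpha>: "h a = hI \<alpha>" if "a \<in> \<alpha>" for a
    proof (rule antisym)
      show "h a \<le> hI \<alpha>"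
        using lower \<alpha>(1) that by blast
      show "hI \<alpha> \<le> h a"
        using \<alpha>(1) that by (intro least) (auto simp: Act_def)
    qed
    have "\<forall>ai\<in>\<alpha>. \<forall>aj\<in>\<alpha>. h ai = h aj"
      using on_\<alpha> by simp
    moreover have "\<forall>ai\<in>\<alpha>. \<forall>ak\<in>Act (\<gamma> \<ominus> \<alpha>). h ai \<le> h ak"
      using on_\<alpha> least by (simp add: Act_iminus)
    moreover have "Eineq (\<gamma> \<ominus> \<alpha>) h"
      using fin by (intro "1.IH"[OF False _ \<alpha>(1) finite_iminus[OF fin] Estar_fibre_Min[OF fin E]]) simp
    ultimately show ?thesis
      unfolding Eineq_iff[OF fin False] using \<alpha>(1) by blast
  qed
qed

lemma Estar_extend:
  assumes fin: "finite \<gamma>" and \<alpha>: "\<alpha> \<in> \<gamma>" and const: "\<forall>a\<in>\<alpha>. h a = c"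
    and below: "\<forall>a\<in>\<alpha>. \<forall>b\<in>Act (\<gamma> \<ominus> \<alpha>). h a \<le> h b"
    and E': "Estar (\<gamma> \<ominus> \<alpha>) h hI'"
  shows "Estar \<gamma> h (\<lambda>\<beta>. if \<beta> \<subseteq> \<alpha> then c else hI' (\<beta> - \<alpha>))"
    (is "Estar _ h ?hI")
proof -
  have lower': "\<forall>\<beta>'\<in>\<gamma> \<ominus> \<alpha>. \<forall>a\<in>\<beta>'. h a \<le> hI' \<beta>'"
    and attained': "\<forall>a\<in>Act (\<gamma> \<ominus> \<alpha>). \<exists>\<beta>'\<in>\<gamma> \<ominus> \<alpha>. a \<in> \<beta>' \<and> hI' \<beta>' = h a"
    using E' unfolding Estar_iff[OF finite_iminus[OF fin]] by blast+
  have lower: "h a \<le> ?hI \<beta>" if \<beta>: "\<beta> \<in> \<gamma>" and a: "a \<in> \<beta>" for a \<beta>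
  proof (cases "\<beta> \<subseteq> \<alpha>")
    case True
    with const a show ?thesis by auto
  next
    case False
    then obtain b where b: "b \<in> \<beta> - \<alpha>" by blast
    have mem: "\<beta> - \<alpha> \<in> \<gamma> \<ominus> \<alpha>"
      using \<beta> False by (rule iminus_memI)
    then have "b \<in> Act (\<gamma> \<ominus> \<alpha>)"
      using b unfolding Act_def by blast
    moreover have "h b \<le> hI' (\<beta> - \<alpha>)"
      using lower' mem b by blast
    ultimately have "h a \<le> hI' (\<beta> - \<alpha>)" if "a \<in> \<alpha>"
      using below that by (meson order_trans)
    moreover have "h a \<le> hI' (\<beta> - \<alpha>)" if "a \<notin> \<alpha>"
      using lower' mem a that by blast
    ultimately show ?thesis
      using False by auto
  qed
  have attained: "\<exists>\<beta>\<in>\<gamma>. a \<in> \<beta> \<and> ?hI \<beta> = h a" if a: "a \<in> Act \<gamma>" for a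
  proof (cases "a \<in> \<alpha>")
    case True
    then show ?thesis
      using \<alpha> const by (intro bexI[OF _ \<alpha>]) simp
  next
    case False
    with a have "a \<in> Act (\<gamma> \<ominus> \<alpha>)"
      by (simp add: Act_iminus)
    then obtain \<beta>' where \<beta>': "\<beta>' \<in> \<gamma> \<ominus> \<alpha>" "a \<in> \<beta>'" "hI' \<beta>' = h a"
      using attained' by blast
    then obtain \<beta> where "\<beta> \<in> \<gamma>" "\<not> \<beta> \<subseteq> \<alpha>" "\<beta>' = \<beta> - \<alpha>"
      unfolding iminus_def by blast
    with \<beta>' show ?thesis
      by (intro bexI[of _ \<beta>]) auto
  qed
  show ?thesis
    unfolding Estar_iff[OF fin] using lower attained by blast
qed

lemma Eineq_imp_Estar: "finite \<gamma> \<Longrightarrow> Eineq \<gamma> h \<Longrightarrow> \<exists>hI. Estar \<gamma> h hI"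
proof (induction \<gamma> h rule: Eineq.induct)
  case (1 \<gamma> h)
  show ?case
  proof (cases "\<gamma> = {}")
    case True
    then show ?thesis by (simp add: Estar_def Act_def)
  next
    case False
    have fin: "finite \<gamma>"
      using "1.prems"(1) .
    obtain \<alpha> where \<alpha>: "\<alpha> \<in> \<gamma>" and const: "\<forall>ai\<in>\<alpha>. \<forall>aj\<in>\<alpha>. h ai = h aj"
      and below: "\<forall>ai\<in>\<alpha>. \<forall>ak\<in>Act (\<gamma> \<ominus> \<alpha>). h ai \<le> h ak" and "Eineq (\<gamma> \<ominus> \<alpha>) h"
      using "1.prems"(2) unfolding Eineq_iff[OF fin False] by (elim bexE conjE) (rule that; assumption)
    have "\<not> infinite \<gamma>"
      using fin by simp
    then obtain hI' where hI': "Estar (\<gamma> \<ominus> \<alpha>) h hI'"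
      using "1.IH"[OF False _ \<alpha> finite_iminus[OF fin] \<open>Eineq (\<gamma> \<ominus> \<alpha>) h\<close>] by blast
    have "\<forall>a\<in>\<alpha>. h a = h (SOME a. a \<in> \<alpha>)"
    proof
      fix a
      assume "a \<in> \<alpha>"
      with const have "\<forall>aj\<in>\<alpha>. h a = h aj"
        by (rule bspec)
      moreover from \<open>a \<in> \<alpha>\<close> have "(SOME a. a \<in> \<alpha>) \<in> \<alpha>"
        by (rule someI)
      ultimately show "h a = h (SOME a. a \<in> \<alpha>)"
        by (rule bspec)
    qed
    then have "Estar \<gamma> h (\<lambda>\<beta>. if \<beta> \<subseteq> \<alpha> then h (SOME a. a \<in> \<alpha>) else hI' (\<beta> - \<alpha>))"
      using Estar_extend[OF fin \<alpha> _ below hI'] by blast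
    then show ?thesis
      by blast
  qed
qed

lemma Estar_clamp_nonneg:
  assumes fin: "finite \<gamma>" and E: "Estar \<gamma> h hI" and nonneg: "\<forall>a\<in>Act \<gamma>. h a \<ge> 0"
  shows "Estar \<gamma> h (\<lambda>\<beta>. max 0 (hI \<beta>))"
proof -
  have lower: "\<forall>\<beta>\<in>\<gamma>. \<forall>a\<in>\<beta>. h a \<le> hI \<beta>"
    and attained: "\<forall>a\<in>Act \<gamma>. \<exists>\<beta>\<in>\<gamma>. a \<in> \<beta> \<and> hI \<beta> = h a"
    using E unfolding Estar_iff[OF fin] by blast+
  have "\<exists>\<beta>\<in>\<gamma>. a \<in> \<beta> \<and> max 0 (hI \<beta>) = h a" if a: "a \<in> Act \<gamma>" for a
  proof -
    obtain \<beta> where "\<beta> \<in> \<gamma>" "a \<in> \<beta>" "hI \<beta> = h a"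
      using attained a by blast
    moreover have "h a \<ge> 0"
      using nonneg a by blast
    ultimately show ?thesis
      by (intro bexI[of _ \<beta>]) auto
  qed
  with lower show ?thesis
    unfolding Estar_iff[OF fin] by (auto simp: le_max_iff_disj)
qed

theorem proposition6:
  fixes B :: "nat \<Rightarrow> ('l,'a,'c) ta" and n :: nat and \<gamma> :: "'a set set"
  assumes disj: "\<forall>i<n. \<forall>j<n. i \<noteq> j \<longrightarrow> acts (B i) \<inter> acts (B j) = {}"
    and fin: "finite \<gamma>"
    and inter: "\<forall>\<alpha>\<in>\<gamma>. is_interaction B n \<alpha>"
  shows "inductive_pred B n \<gamma> (\<lambda>s. Estar \<gamma> (\<lambda>a. snd s (HAct a)) (\<lambda>\<alpha>. snd s (HInt \<alpha>))) \<and>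
         (\<forall>h :: 'a \<Rightarrow> real. (\<forall>a\<in>Act \<gamma>. h a \<ge> 0) \<longrightarrow>
           ((\<exists>hI :: 'a set \<Rightarrow> real. (\<forall>\<alpha>\<in>\<gamma>. hI \<alpha> \<ge> 0) \<and> Estar \<gamma> h hI) \<longleftrightarrow> Eineq \<gamma> h))"
proof (intro conjI allI impI iffI)
  show "inductive_pred B n \<gamma> (\<lambda>s. Estar \<gamma> (\<lambda>a. snd s (HAct a)) (\<lambda>\<alpha>. snd s (HInt \<alpha>)))"
    using fin by (rule inductive_pred_Estar)
  fix h :: "'a \<Rightarrow> real"
  assume nonneg: "\<forall>a\<in>Act \<gamma>. h a \<ge> 0"
  show "\<exists>hI. (\<forall>\<alpha>\<in>\<gamma>. hI \<alpha> \<ge> 0) \<and> Estar \<gamma> h hI \<Longrightarrow> Eineq \<gamma> h"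
    using fin Estar_imp_Eineq by blast
  assume "Eineq \<gamma> h"
  then obtain hI where "Estar \<gamma> h hI"
    using fin Eineq_imp_Estar by blast
  then have "Estar \<gamma> h (\<lambda>\<beta>. max 0 (hI \<beta>))"
    using fin nonneg by (intro Estar_clamp_nonneg)
  then show "\<exists>hI. (\<forall>\<alpha>\<in>\<gamma>. hI \<alpha> \<ge> 0) \<and> Estar \<gamma> h hI"
    by (intro exI[of _ "\<lambda>\<beta>. max 0 (hI \<beta>)"]) simp
qed

end
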